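(* For every $n\ge1$, $$\det\widehat M=(-1)^{\frac{n(n-1)}2}\,2^{n^2+n+1}\,(2n+15)\,\frac{(n+6)!}{6!},$$ in particular $\det\widehat M\neq0$.
   Context: Let $\mathcal E=\{\emptyset\}\cup\{1,\dots,n\}\cup\{\{p,q\}:1\le p<q\le n\}$ (pair indices written with $p<q$). $\widehat M$ is the $\mathcal E\times\mathcal E$ rational matrix with entries $\widehat M_{\rho,\sigma}$, $\rho$ row, $\sigma$ column: Row $\emptyset$: $\widehat M_{\emptyset,\emptyset}=5(n+6)$, $\widehat M_{\emptyset,p}=5n+34$, $\widehat M_{\emptyset,\{p,q\}}=5(n+6)$. Row $k$: $\widehat M_{k,\emptyset}=7$; $\widehat M_{k,p}=35$ if $p=k$, $7$ if $p\neq k$; $\widehat M_{k,\{p,q\}}=3$ if $k=p$, $35$ if $k=q$, $7$ if $k\notin\{p,q\}$. Row $\{k,l\}$: $\widehat M_{\{k,l\},\emptyset}=5$; $\widehat M_{\{k,l\},p}=15$ if $p\in\{k,l\}$, $5$ otherwise; $\widehat M_{\{k,l\},\{p,q\}}=9$ if $\{k,l\}=\{p,q\}$, $3$ if $\{k,l\}\cap\{p,q\}=\{p\}$, $15$ if $\{k,l\}\cap\{p,q\}=\{q\}$, $5$ if disjoint. *)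

theory Defs
  imports "Jordan_Normal_Form.Determinant"
begin

text \<open>Index set E = {emptyset} u {1..n} u {{p,q} : 1 <= p < q <= n}.
  Pairs are represented as Pr p q with p < q.\<close>

datatype idx = Emp | Sg nat | Pr nat nat

definition Eset :: "nat \<Rightarrow> idx set" where
  "Eset n = {Emp} \<union> Sg ` {1..n} \<union> {Pr p q | p q. 1 \<le> p \<and> p < q \<and> q \<le> n}"

text \<open>An enumeration (without repetitions) of E; the determinant does not
  depend on the chosen order since rows and columns are permuted simultaneously.\<close>

definition Elist :: "nat \<Rightarrow> idx list" where
  "Elist n = [Emp] @ map Sg [1..<n+1]
     @ concat (map (\<lambda>p. map (\<lambda>q. Pr p q) [p+1..<n+1]) [1..<n])"

lemma set_Elist: "set (Elist n) = Eset n"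
proof -
  have "set (concat (map (\<lambda>p. map (\<lambda>q. Pr p q) [p+1..<n+1]) [1..<n]))
        = {Pr p q | p q. 1 \<le> p \<and> p < q \<and> q \<le> n}"
  proof (intro equalityI subsetI)
    fix x assume "x \<in> {Pr p q | p q. 1 \<le> p \<and> p < q \<and> q \<le> n}"
    then obtain p q where "x = Pr p q" "1 \<le> p" "p < q" "q \<le> n" by blast
    then show "x \<in> set (concat (map (\<lambda>p. map (\<lambda>q. Pr p q) [p+1..<n+1]) [1..<n]))"
      by (simp del: upt_Suc) (intro bexI[of _ p]; auto)
  qed (auto simp del: upt_Suc)
  then show ?thesis unfolding Elist_def Eset_def by (auto simp del: upt_Suc)
qed

lemma distinct_Elist: "distinct (Elist n)"
proof -
  have "distinct (concat (map (\<lambda>p. map (\<lambda>q. Pr p q) [p+1..<n+1]) [1..<n]))"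
  proof (rule distinct_concat)
    show "distinct (map (\<lambda>p. map (\<lambda>q. Pr p q) [p+1..<n+1]) [1..<n])"
      unfolding distinct_map
    proof (intro conjI inj_onI)
      fix x y assume x: "x \<in> set [1..<n]" and y: "y \<in> set [1..<n]"
        and e: "map (\<lambda>q. Pr x q) [x+1..<n+1] = map (\<lambda>q. Pr y q) [y+1..<n+1]"
      have "hd (map (\<lambda>q. Pr x q) [x+1..<n+1]) = Pr x (x+1)"
        using x by (simp add: hd_map hd_upt del: upt_Suc)
      moreover have "hd (map (\<lambda>q. Pr y q) [y+1..<n+1]) = Pr y (y+1)"
        using y by (simp add: hd_map hd_upt del: upt_Suc)
      ultimately show "x = y" using e by simp
    qed simp
  qed (auto simp: distinct_map inj_on_def simp del: upt_Suc)
  then show ?thesis unfolding Elist_def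
    by (auto simp del: upt_Suc simp: distinct_map inj_on_def)
qed

fun Mhat_entry :: "nat \<Rightarrow> idx \<Rightarrow> idx \<Rightarrow> rat" where
  "Mhat_entry n Emp Emp = 5 * (of_nat n + 6)"
| "Mhat_entry n Emp (Sg p) = 5 * of_nat n + 34"
| "Mhat_entry n Emp (Pr p q) = 5 * (of_nat n + 6)"
| "Mhat_entry n (Sg k) Emp = 7"
| "Mhat_entry n (Sg k) (Sg p) = (if p = k then 35 else 7)"
| "Mhat_entry n (Sg k) (Pr p q) = (if k = p then 3 else if k = q then 35 else 7)"
| "Mhat_entry n (Pr k l) Emp = 5"
| "Mhat_entry n (Pr k l) (Sg p) = (if p \<in> {k, l} then 15 else 5)"
| "Mhat_entry n (Pr k l) (Pr p q) =
     (if {k, l} = {p, q} then 9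
      else if {k, l} \<inter> {p, q} = {p} then 3
      else if {k, l} \<inter> {p, q} = {q} then 15
      else 5)"

definition Mhat :: "nat \<Rightarrow> rat mat" where
  "Mhat n = mat (length (Elist n)) (length (Elist n))
     (\<lambda>(i, j). Mhat_entry n (Elist n ! i) (Elist n ! j))"

end

theory Submission
  imports Defs "HOL-Library.Product_Lexorder"
begin

text \<open>
  Two unimodular column-operation matrices bring \<open>M\<close> to triangular form. First
  subtract column \<open>\<emptyset>\<close> from every column \<open>p\<close>, and replace column \<open>{p,q}\<close> by
  \<open>{p,q} - q + (p - \<emptyset>)/5\<close>; this clears most entries. Then add \<open>-1/4\<close> of every
  singleton column to column \<open>\<emptyset>\<close>, and \<open>5/2\<close> of every pair column \<open>{r,s}\<close> with
  \<open>p \<in> {r,s}\<close> to column \<open>p\<close>. The result is upper triangular for the order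
  \<open>\<emptyset> < 1 < \<dots> < n < {1,2} < {1,3} < \<dots>\<close>, with diagonal \<open>2(2n+15)\<close>, \<open>4(n-p+7)\<close>
  and \<open>-4\<close>, whose product is the stated value.
\<close>

definition mat_over :: "'a list \<Rightarrow> ('a \<Rightarrow> 'a \<Rightarrow> 'b) \<Rightarrow> 'b mat" where
  "mat_over xs f = mat (length xs) (length xs) (\<lambda>(i, j). f (xs ! i) (xs ! j))"

lemma mat_over_carrier: "mat_over xs f \<in> carrier_mat (length xs) (length xs)"
  by (simp add: mat_over_def)

lemma mat_over_cong:
  "(\<And>a b. a \<in> set xs \<Longrightarrow> b \<in> set xs \<Longrightarrow> f a b = g a b)
    \<Longrightarrow> mat_over xs f = mat_over xs g"
  unfolding mat_over_def by (rule eq_matI) auto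

lemma sum_nth_distinct:
  "distinct xs \<Longrightarrow> (\<Sum>i<length xs. h (xs ! i)) = (\<Sum>c\<in>set xs. h c)"
  by (simp add: sum.distinct_set_conv_list sum_list_sum_nth atLeast0LessThan)

lemma mat_over_mult:
  fixes f g :: "'a \<Rightarrow> 'a \<Rightarrow> 'b :: comm_semiring_0"
  assumes "distinct xs"
  shows "mat_over xs f * mat_over xs g = mat_over xs (\<lambda>a b. \<Sum>c\<in>set xs. f a c * g c b)"
proof (rule eq_matI)
  fix i j assume "i < dim_row (mat_over xs (\<lambda>a b. \<Sum>c\<in>set xs. f a c * g c b))"
    and "j < dim_col (mat_over xs (\<lambda>a b. \<Sum>c\<in>set xs. f a c * g c b))"
  then show "(mat_over xs f * mat_over xs g) $$ (i, j)
      = mat_over xs (\<lambda>a b. \<Sum>c\<in>set xs. f a c * g c b) $$ (i, j)"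
    using sum_nth_distinct[OF assms, of "\<lambda>c. f (xs ! i) c * g c (xs ! j)"]
    by (simp add: mat_over_def scalar_prod_def lessThan_atLeast0)
qed (simp_all add: mat_over_def)

lemma det_mat_over_upper_triangular:
  fixes rk :: "'a \<Rightarrow> 'k::linorder" and f :: "'a \<Rightarrow> 'a \<Rightarrow> 'b::comm_ring_1"
  assumes sorted: "sorted_wrt (\<lambda>a b. rk a < rk b) xs"
    and zero: "\<And>a b. rk b < rk a \<Longrightarrow> a \<in> set xs \<Longrightarrow> b \<in> set xs \<Longrightarrow> f a b = 0"
  shows "det (mat_over xs f) = (\<Prod>a\<in>set xs. f a a)"
proof -
  have "distinct xs"
    using sorted by (simp add: strict_sorted_iff distinct_map flip: sorted_wrt_map)
  have "upper_triangular (mat_over xs f)"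
    using zero sorted_wrt_nth_less[OF sorted] by (auto simp: upper_triangular_def mat_over_def)
  then have "det (mat_over xs f) = prod_list (diag_mat (mat_over xs f))"
    using det_upper_triangular mat_over_carrier by blast
  also have "\<dots> = (\<Prod>a\<in>set xs. f a a)"
    using \<open>distinct xs\<close> unfolding prod_list_diag_prod
    by (simp add: mat_over_def prod.distinct_set_conv_list prod.list_conv_set_nth)
  finally show ?thesis .
qed

lemma det_mat_over_lower_triangular:
  fixes rk :: "'a \<Rightarrow> 'k::linorder" and f :: "'a \<Rightarrow> 'a \<Rightarrow> 'b::comm_ring_1"
  assumes "sorted_wrt (\<lambda>a b. rk a < rk b) xs"
    and "\<And>a b. rk a < rk b \<Longrightarrow> a \<in> set xs \<Longrightarrow> b \<in> set xs \<Longrightarrow> f a b = 0"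
  shows "det (mat_over xs f) = (\<Prod>a\<in>set xs. f a a)"
proof -
  have "transpose_mat (mat_over xs f) = mat_over xs (\<lambda>a b. f b a)"
    by (rule eq_matI) (auto simp: mat_over_def)
  then have "det (mat_over xs f) = det (mat_over xs (\<lambda>a b. f b a))"
    by (metis det_transpose mat_over_carrier)
  also have "\<dots> = (\<Prod>a\<in>set xs. f a a)"
    by (rule det_mat_over_upper_triangular[OF assms(1)]) (use assms(2) in auto)
  finally show ?thesis .
qed

lemma sorted_wrt_concat_map:
  assumes "\<And>x. x \<in> set xs \<Longrightarrow> sorted_wrt R (f x)"
    and "sorted_wrt (\<lambda>x y. \<forall>a\<in>set (f x). \<forall>b\<in>set (f y). R a b) xs"
  shows "sorted_wrt R (concat (map f xs))"
  using assms by (induction xs) (auto simp: sorted_wrt_append)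

fun rank :: "idx \<Rightarrow> nat \<times> nat" where
  "rank Emp = (0, 0)"
| "rank (Sg p) = (0, p)"
| "rank (Pr p q) = (p, q)"

lemma sorted_rank_Elist: "sorted_wrt (\<lambda>a b. rank a < rank b) (Elist n)"
proof -
  let ?pairs = "concat (map (\<lambda>p. map (\<lambda>q. Pr p q) [p+1..<n+1]) [1..<n])"
  have "sorted_wrt (\<lambda>a b. rank a < rank b) ?pairs"
    by (rule sorted_wrt_concat_map)
      (auto simp: sorted_wrt_map simp del: upt_Suc intro: sorted_wrt_mono_rel[OF _ sorted_wrt_upt])
  then show ?thesis
    unfolding Elist_def
    by (auto simp: sorted_wrt_append sorted_wrt_map simp del: upt_Suc
        intro: sorted_wrt_mono_rel[OF _ sorted_wrt_upt])
qed

definition Pairs :: "nat \<Rightarrow> (nat \<times> nat) set" where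
  "Pairs n = {(p, q). 1 \<le> p \<and> p < q \<and> q \<le> n}"

lemma finite_Pairs [simp]: "finite (Pairs n)"
  by (rule finite_subset[of _ "{0..n} \<times> {0..n}"]) (auto simp: Pairs_def)

lemma Eset_eq: "Eset n = insert Emp (Sg ` {1..n} \<union> (\<lambda>(p, q). Pr p q) ` Pairs n)"
  by (auto simp: Eset_def Pairs_def)

lemma Emp_in_Eset [simp]: "Emp \<in> Eset n"
  by (simp add: Eset_def)

lemma Sg_in_Eset_iff [simp]: "Sg p \<in> Eset n \<longleftrightarrow> 1 \<le> p \<and> p \<le> n"
  by (auto simp: Eset_def)

lemma Pr_in_Eset_iff [simp]: "Pr p q \<in> Eset n \<longleftrightarrow> 1 \<le> p \<and> p < q \<and> q \<le> n"
  by (auto simp: Eset_def)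

lemma finite_Eset [simp]: "finite (Eset n)"
  by (simp flip: set_Elist)

lemma sum_Eset:
  "(\<Sum>c\<in>Eset n. h c) = h Emp + (\<Sum>p=1..n. h (Sg p)) + (\<Sum>(p, q)\<in>Pairs n. h (Pr p q))"
proof -
  have "Emp \<notin> Sg ` {1..n} \<union> (\<lambda>(p, q). Pr p q) ` Pairs n"
    and "Sg ` {1..n} \<inter> (\<lambda>(p, q). Pr p q) ` Pairs n = {}"
    by auto
  then show ?thesis
    unfolding Eset_eq
    by (simp add: sum.union_disjoint sum.reindex inj_on_def prod_eq_iff case_prod_unfold add.assoc)
qed

lemma prod_Eset:
  "(\<Prod>c\<in>Eset n. h c) = h Emp * (\<Prod>p=1..n. h (Sg p)) * (\<Prod>(p, q)\<in>Pairs n. h (Pr p q))"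
proof -
  have "Emp \<notin> Sg ` {1..n} \<union> (\<lambda>(p, q). Pr p q) ` Pairs n"
    and "Sg ` {1..n} \<inter> (\<lambda>(p, q). Pr p q) ` Pairs n = {}"
    by auto
  then show ?thesis
    unfolding Eset_eq
    by (simp add: prod.union_disjoint prod.reindex inj_on_def prod_eq_iff case_prod_unfold mult.assoc)
qed

lemma card_Pairs: "2 * card (Pairs n) = n * (n - 1)"
proof (induction n)
  case 0
  have "Pairs 0 = {}"
    by (auto simp: Pairs_def)
  then show ?case
    by simp
next
  case (Suc n)
  have "Pairs (Suc n) = Pairs n \<union> (\<lambda>r. (r, Suc n)) ` {1..n}"
    by (auto simp: Pairs_def)
  moreover have "Pairs n \<inter> (\<lambda>r. (r, Suc n)) ` {1..n} = {}"
    by (auto simp: Pairs_def)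
  ultimately have "card (Pairs (Suc n)) = card (Pairs n) + n"
    by (simp add: card_Un_disjoint card_image inj_on_def)
  with Suc show ?case
    by (cases n) simp_all
qed

lemma sum_Pairs_containing:
  assumes "1 \<le> p" "p \<le> n"
  shows "(\<Sum>(r, s)\<in>Pairs n. if p = r \<or> p = s then g r s else 0)
       = (\<Sum>s\<in>{p<..n}. g p s) + (\<Sum>r\<in>{1..<p}. g r p)"
proof -
  have "{(r, s) \<in> Pairs n. p = r \<or> p = s} = Pair p ` {p<..n} \<union> (\<lambda>r. (r, p)) ` {1..<p}"
    using assms by (auto simp: Pairs_def)
  then have "(\<Sum>(r, s)\<in>Pairs n. if p = r \<or> p = s then g r s else 0)
           = (\<Sum>(r, s)\<in>Pair p ` {p<..n} \<union> (\<lambda>r. (r, p)) ` {1..<p}. g r s)"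
    by (simp add: sum.inter_filter[symmetric] case_prod_unfold if_distrib)
  also have "\<dots> = (\<Sum>s\<in>{p<..n}. g p s) + (\<Sum>r\<in>{1..<p}. g r p)"
    by (subst sum.union_disjoint) (auto simp: sum.reindex inj_on_def)
  finally show ?thesis .
qed

lemma sum_mult_delta:
  fixes f :: "'a \<Rightarrow> 'b::comm_semiring_1"
  assumes "finite A" "x \<in> A"
  shows "(\<Sum>c\<in>A. f c * of_bool (c = x)) = f x"
proof -
  have "A \<inter> {c. c = x} = {x}"
    using assms(2) by auto
  then show ?thesis
    using assms(1) by simp
qed

fun colop1 :: "idx \<Rightarrow> idx \<Rightarrow> rat" where
  "colop1 c Emp = of_bool (c = Emp)"
| "colop1 c (Sg p) = of_bool (c = Sg p) - of_bool (c = Emp)"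
| "colop1 c (Pr p q) =
     of_bool (c = Pr p q) - of_bool (c = Sg q) + (of_bool (c = Sg p) - of_bool (c = Emp)) / 5"

lemma sum_mult_colop1:
  assumes "b \<in> Eset n"
  shows "(\<Sum>c\<in>Eset n. f c * colop1 c b) =
    (case b of
      Emp \<Rightarrow> f Emp
    | Sg p \<Rightarrow> f (Sg p) - f Emp
    | Pr p q \<Rightarrow> f (Pr p q) - f (Sg q) + (f (Sg p) - f Emp) / 5)"
  using assms
  by (cases b) (simp_all add: ring_distribs diff_divide_distrib sum.distrib sum_subtractf
      sum_mult_delta flip: sum_divide_distrib del: sum_mult_of_bool_eq)

fun Mhat1 :: "nat \<Rightarrow> idx \<Rightarrow> idx \<Rightarrow> rat" where
  "Mhat1 n a Emp = Mhat_entry n a Emp"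
| "Mhat1 n Emp (Sg p) = 4"
| "Mhat1 n (Sg k) (Sg p) = (if k = p then 28 else 0)"
| "Mhat1 n (Pr k l) (Sg p) = (if p = k \<or> p = l then 10 else 0)"
| "Mhat1 n Emp (Pr p q) = -16/5"
| "Mhat1 n (Sg k) (Pr p q) = (if k = p then 8/5 else 0)"
| "Mhat1 n (Pr k l) (Pr p q) = (if k = p \<and> l = q then -4 else 0)"

lemma Mhat1_Pr_Pr:
  assumes "k < l" "p < q"
  shows "Mhat_entry n (Pr k l) (Pr p q) - Mhat_entry n (Pr k l) (Sg q)
      + (Mhat_entry n (Pr k l) (Sg p) - Mhat_entry n (Pr k l) Emp) / 5 = Mhat1 n (Pr k l) (Pr p q)"
  using assms
  by (cases "p = k"; cases "p = l"; cases "q = k"; cases "q = l") (simp_all add: doubleton_eq_iff)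

lemma sum_Mhat_colop1:
  assumes "a \<in> Eset n" "b \<in> Eset n"
  shows "(\<Sum>c\<in>Eset n. Mhat_entry n a c * colop1 c b) = Mhat1 n a b"
proof (cases "\<exists>k l p q. a = Pr k l \<and> b = Pr p q")
  case True
  then obtain k l p q where ab: "a = Pr k l" "b = Pr p q"
    by blast
  have "(\<Sum>c\<in>Eset n. Mhat_entry n a c * colop1 c b) = Mhat_entry n a (Pr p q)
      - Mhat_entry n a (Sg q) + (Mhat_entry n a (Sg p) - Mhat_entry n a Emp) / 5"
    using sum_mult_colop1[OF assms(2)] by (simp only: ab idx.case)
  also have "\<dots> = Mhat1 n a b"
    using assms unfolding ab by (intro Mhat1_Pr_Pr) simp_all
  finally show ?thesis .
next
  case False
  with assms show ?thesis
    by (cases a; cases b) (simp_all add: sum_mult_colop1 del: colop1.simps)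
qed

fun colop2 :: "idx \<Rightarrow> idx \<Rightarrow> rat" where
  "colop2 Emp Emp = 1"
| "colop2 (Sg k) Emp = -1/4"
| "colop2 (Pr k l) Emp = 0"
| "colop2 Emp (Sg p) = 0"
| "colop2 (Sg k) (Sg p) = of_bool (k = p)"
| "colop2 (Pr r s) (Sg p) = (if p = r \<or> p = s then 5/2 else 0)"
| "colop2 c (Pr p q) = of_bool (c = Pr p q)"

lemma sum_mult_colop2:
  assumes "b \<in> Eset n"
  shows "(\<Sum>c\<in>Eset n. f c * colop2 c b) =
    (case b of
      Emp \<Rightarrow> f Emp - (\<Sum>p=1..n. f (Sg p)) / 4
    | Sg p \<Rightarrow> f (Sg p) + 5/2 * ((\<Sum>s\<in>{p<..n}. f (Pr p s)) + (\<Sum>r\<in>{1..<p}. f (Pr r p)))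
    | Pr p q \<Rightarrow> f (Pr p q))"
proof (cases b)
  case Emp
  then show ?thesis
    by (simp add: sum_Eset sum_divide_distrib sum_negf)
next
  case (Sg p)
  have "(\<Sum>(r, s)\<in>Pairs n. f (Pr r s) * colop2 (Pr r s) b)
      = (\<Sum>(r, s)\<in>Pairs n. if p = r \<or> p = s then 5/2 * f (Pr r s) else 0)"
    using Sg by (intro sum.cong) auto
  also have "\<dots> = (\<Sum>s\<in>{p<..n}. 5/2 * f (Pr p s)) + (\<Sum>r\<in>{1..<p}. 5/2 * f (Pr r p))"
    using Sg assms by (intro sum_Pairs_containing) simp_all
  also have "\<dots> = 5/2 * ((\<Sum>s\<in>{p<..n}. f (Pr p s)) + (\<Sum>r\<in>{1..<p}. f (Pr r p)))"
    by (simp only: sum_distrib_left distrib_left)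
  finally have pairs: "(\<Sum>(r, s)\<in>Pairs n. f (Pr r s) * colop2 (Pr r s) b)
      = 5/2 * ((\<Sum>s\<in>{p<..n}. f (Pr p s)) + (\<Sum>r\<in>{1..<p}. f (Pr r p)))" .
  have "(\<Sum>c\<in>Eset n. f c * colop2 c b)
      = f (Sg p) + (\<Sum>(r, s)\<in>Pairs n. f (Pr r s) * colop2 (Pr r s) b)"
    using assms Sg by (simp add: sum_Eset sum_mult_delta case_prod_unfold del: sum_mult_of_bool_eq)
  with Sg show ?thesis
    unfolding pairs by simp
next
  case (Pr p q)
  with assms show ?thesis
    by (simp add: sum_mult_delta del: sum_mult_of_bool_eq)
qed

fun Mhat2 :: "nat \<Rightarrow> idx \<Rightarrow> idx \<Rightarrow> rat" where
  "Mhat2 n Emp Emp = 4 * of_nat n + 30"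
| "Mhat2 n (Sg k) Emp = 0"
| "Mhat2 n (Pr k l) Emp = 0"
| "Mhat2 n Emp (Sg p) = 12 - 8 * of_nat n"
| "Mhat2 n (Sg k) (Sg p) = (if k = p then 28 + 4 * of_nat (n - p) else if k < p then 4 else 0)"
| "Mhat2 n (Pr k l) (Sg p) = 0"
| "Mhat2 n a (Pr p q) = Mhat1 n a (Pr p q)"

lemma sum_Mhat1_colop2:
  assumes "a \<in> Eset n" "b \<in> Eset n"
  shows "(\<Sum>c\<in>Eset n. Mhat1 n a c * colop2 c b) = Mhat2 n a b"
proof (cases "\<exists>k l. a = Pr k l \<and> b = Emp")
  case True
  then obtain k l where ab: "a = Pr k l" "b = Emp"
    by blast
  with assms have "k \<noteq> l" "k \<in> {1..n}" "l \<in> {1..n}"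
    by auto
  then have "(\<Sum>p=1..n. Mhat1 n a (Sg p))
      = (\<Sum>p=1..n. (if p = k then 10 else 0) + (if p = l then 10 else 0))"
    unfolding ab by (intro sum.cong) auto
  also have "\<dots> = 20"
    using \<open>k \<in> {1..n}\<close> \<open>l \<in> {1..n}\<close> by (simp add: sum.distrib)
  finally show ?thesis
    using ab by (simp add: sum_mult_colop2 del: colop2.simps)
next
  case False
  with assms show ?thesis
    unfolding sum_mult_colop2[OF assms(2)]
    by (cases a; cases b) (simp_all add: of_nat_diff field_simps)
qed

lemma Mhat_eq_mat_over: "Mhat n = mat_over (Elist n) (Mhat_entry n)"
  by (simp add: Mhat_def mat_over_def)

lemma Mhat_colop_factorization:
  "Mhat n * mat_over (Elist n) colop1 * mat_over (Elist n) colop2 = mat_over (Elist n) (Mhat2 n)"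
proof -
  have "Mhat n * mat_over (Elist n) colop1 = mat_over (Elist n) (Mhat1 n)"
    unfolding Mhat_eq_mat_over mat_over_mult[OF distinct_Elist]
    by (rule mat_over_cong) (simp add: set_Elist sum_Mhat_colop1)
  also have "\<dots> * mat_over (Elist n) colop2 = mat_over (Elist n) (Mhat2 n)"
    unfolding mat_over_mult[OF distinct_Elist]
    by (rule mat_over_cong) (simp add: set_Elist sum_Mhat1_colop2)
  finally show ?thesis .
qed

lemma det_colop1: "det (mat_over (Elist n) colop1) = 1"
proof -
  have "det (mat_over (Elist n) colop1) = (\<Prod>a\<in>Eset n. colop1 a a)"
    unfolding set_Elist[symmetric]
  proof (rule det_mat_over_upper_triangular[OF sorted_rank_Elist])
    fix a b assume "rank b < rank a" "a \<in> set (Elist n)" "b \<in> set (Elist n)"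
    then show "colop1 a b = 0"
      by (cases a; cases b) (auto simp: set_Elist)
  qed
  also have "\<dots> = 1"
  proof (rule prod.neutral, rule ballI)
    fix a show "colop1 a a = 1"
      by (cases a) simp_all
  qed
  finally show ?thesis .
qed

lemma det_colop2: "det (mat_over (Elist n) colop2) = 1"
proof -
  have "det (mat_over (Elist n) colop2) = (\<Prod>a\<in>Eset n. colop2 a a)"
    unfolding set_Elist[symmetric]
  proof (rule det_mat_over_lower_triangular[OF sorted_rank_Elist])
    fix a b assume "rank a < rank b" "a \<in> set (Elist n)" "b \<in> set (Elist n)"
    then show "colop2 a b = 0"
      by (cases a; cases b) (auto simp: set_Elist)
  qed
  also have "\<dots> = 1"
  proof (rule prod.neutral, rule ballI)
    fix a show "colop2 a a = 1"
      by (cases a) simp_all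
  qed
  finally show ?thesis .
qed

lemma det_Mhat2: "det (mat_over (Elist n) (Mhat2 n)) = (\<Prod>a\<in>Eset n. Mhat2 n a a)"
  unfolding set_Elist[symmetric]
proof (rule det_mat_over_upper_triangular[OF sorted_rank_Elist])
  fix a b assume "rank b < rank a" "a \<in> set (Elist n)" "b \<in> set (Elist n)"
  then show "Mhat2 n a b = 0"
    by (cases a; cases b) (auto simp: set_Elist)
qed

lemma det_Mhat_eq_prod_diag: "det (Mhat n) = (\<Prod>a\<in>Eset n. Mhat2 n a a)"
proof -
  have M: "Mhat n \<in> carrier_mat (length (Elist n)) (length (Elist n))"
    unfolding Mhat_eq_mat_over by (rule mat_over_carrier)
  have "det (mat_over (Elist n) (Mhat2 n))
      = det (Mhat n) * det (mat_over (Elist n) colop1) * det (mat_over (Elist n) colop2)"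
    unfolding Mhat_colop_factorization[symmetric]
    using det_mult[OF mult_carrier_mat[OF M mat_over_carrier] mat_over_carrier]
      det_mult[OF M mat_over_carrier] by simp
  then show ?thesis
    by (simp add: det_colop1 det_colop2 det_Mhat2)
qed

lemma prod_desc_eq_fact_div:
  "(\<Prod>p=1..n. of_nat (n - p + k + 1)) = (fact (n + k) / fact k :: 'a::field_char_0)"
proof (induction n)
  case (Suc n)
  have "(\<Prod>p=1..Suc n. of_nat (Suc n - p + k + 1) :: 'a)
      = of_nat (n + k + 1) * (\<Prod>p=Suc 1..Suc n. of_nat (Suc n - p + k + 1))"
    by (subst prod.atLeast_Suc_atMost) simp_all
  also have "\<dots> = of_nat (n + k + 1) * (\<Prod>p=1..n. of_nat (n - p + k + 1))"
    unfolding prod.shift_bounds_cl_Suc_ivl diff_Suc_Suc ..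
  also have "\<dots> = fact (Suc n + k) / fact k"
    unfolding Suc.IH add_Suc fact_Suc by simp
  finally show ?case .
qed simp

lemma prod_diag_Mhat2:
  "(\<Prod>a\<in>Eset n. Mhat2 n a a)
    = (4 * of_nat n + 30) * 4 ^ n * (fact (n + 6) / fact 6) * (-4) ^ card (Pairs n)"
proof -
  have "(\<Prod>p=1..n. Mhat2 n (Sg p) (Sg p)) = (\<Prod>p=1..n. 4 * of_nat (n - p + 6 + 1))"
    by (intro prod.cong) auto
  also have "\<dots> = 4 ^ n * (fact (n + 6) / fact 6)"
    by (simp only: prod.distrib prod_constant card_atLeastAtMost prod_desc_eq_fact_div) simp
  finally show ?thesis
    by (simp add: prod_Eset case_prod_unfold)
qed

theorem mainTheorem12:
  fixes n :: nat
  assumes "n \<ge> 1"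
  shows "det (Mhat n) = (-1) ^ (n * (n - 1) div 2) * 2 ^ (n\<^sup>2 + n + 1) * (2 * of_nat n + 15)
            * fact (n + 6) / fact 6
         \<and> det (Mhat n) \<noteq> 0"
proof -
  define m where "m = card (Pairs n)"
  have m: "n * (n - 1) div 2 = m" "n\<^sup>2 + n + 1 = 2 * m + 2 * n + 1"
    using card_Pairs[of n] unfolding m_def by (cases n; simp add: power2_eq_square)+
  have "(2::rat) ^ (2 * m + 2 * n + 1) = 2 * 4 ^ m * 4 ^ n"
    by (simp add: power_add power_mult)
  then have "det (Mhat n)
      = (-1) ^ m * 2 ^ (2 * m + 2 * n + 1) * (2 * of_nat n + 15) * fact (n + 6) / fact 6"
    unfolding det_Mhat_eq_prod_diag prod_diag_Mhat2 m_def[symmetric]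
    by (simp add: power_minus[of 4])
  then show ?thesis
    unfolding m by simp
qed

end
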